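(* Let $d\ge 3$ be odd. Then $G_d$ is weakly regular branch over its commutator subgroup $G_d'$: $G_d$ is spherically transitive and $G_d'\times\cdots\times G_d'$ ($d$ factors) is contained in $\psi_1(G_d'\cap \mathrm{St}_{G_d}(\widehat 1))$.
   Context: Let $d\ge 3$, $X=\{1,\dots,d\}$, $T$ the $d$-regular rooted tree with vertex set $X^*$. $\mathrm{Aut}(T)$ is the group of root-preserving automorphisms with product left-to-right: $(gh)(u)=h(g(u))$. Sections $g|_u$ are defined by $g(uv)=g(u)\,g|_u(v)$; we write $g=(g|_1,\dots,g|_d)\lambda_g$ with $\lambda_g\in S_d$ the action on the first level; $e$ is the identity; $\overline{j}\in\{1,\dots,d\}$ denotes $j$ mod $d$. $G_d=\langle a_1,\dots,a_d\rangle\le\mathrm{Aut}(T)$ where $a_i$ acts on the first level as $(i\ \overline{i+1})$, with $a_i|_i=a_i$, $a_i|_{\overline{i+1}}=a_{\overline{i+1}}$, and $a_i|_x=e$ otherwise. $\mathrm{St}_{G}(\widehat 1)$ is the subgroup of elements fixing every vertex of the first level $X$, and $\psi_1:\mathrm{St}_G(\widehat1)\to G^d$, $g\mapsto (g|_1,\dots,g|_d)$ is the (injective) homomorphism. A group is spherically transitive if it acts transitively on each level $X^k$. *)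

theory Defs
  imports "HOL-Algebra.Algebra"
begin

text \<open>Vertices of the d-regular rooted tree: words over the alphabet X = {1..d}.\<close>
definition words :: "nat \<Rightarrow> nat list set" where
  "words d = {w. set w \<subseteq> {1..d}}"

text \<open>Root-preserving tree automorphisms: bijections of the vertex set preserving
  length (levels) and the prefix (edge) relation; extensional off the vertex set.\<close>
definition tree_aut :: "nat \<Rightarrow> (nat list \<Rightarrow> nat list) set" where
  "tree_aut d = {f \<in> Bij (words d).
      (\<forall>u \<in> words d. length (f u) = length u) \<and>
      (\<forall>u v. u @ v \<in> words d \<longrightarrow> take (length u) (f (u @ v)) = f u)}"

text \<open>Aut(T) with left-to-right product: (g h)(u) = h(g(u)).\<close>
definition AutT :: "nat \<Rightarrow> (nat list \<Rightarrow> nat list) monoid" where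
  "AutT d = \<lparr>carrier = tree_aut d,
             monoid.mult = (\<lambda>g h. compose (words d) h g),
             monoid.one = (\<lambda>x \<in> words d. x)\<rparr>"

text \<open>Section g|_u, defined by g(uv) = g(u) g|_u(v).\<close>
definition sect :: "nat \<Rightarrow> (nat list \<Rightarrow> nat list) \<Rightarrow> nat list \<Rightarrow> (nat list \<Rightarrow> nat list)" where
  "sect d g u = (\<lambda>v \<in> words d. drop (length u) (g (u @ v)))"

text \<open>The index \<open>i+1\<close> mod d, taken in {1..d}.\<close>
definition nxt :: "nat \<Rightarrow> nat \<Rightarrow> nat" where
  "nxt d i = i mod d + 1"

text \<open>Action of a_i: on the first level the transposition (i, i+1), with sections
  a_i|_i = a_i, a_i|_{i+1} = a_{i+1}, and trivial sections elsewhere.\<close>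
fun act :: "nat \<Rightarrow> nat \<Rightarrow> nat list \<Rightarrow> nat list" where
  "act d i [] = []"
| "act d i (x # w) =
     (if x = i then nxt d i # act d i w
      else if x = nxt d i then i # act d (nxt d i) w
      else x # w)"

definition gen_a :: "nat \<Rightarrow> nat \<Rightarrow> (nat list \<Rightarrow> nat list)" where
  "gen_a d i = (\<lambda>w \<in> words d. act d i w)"

definition Gd :: "nat \<Rightarrow> (nat list \<Rightarrow> nat list) set" where
  "Gd d = generate (AutT d) (gen_a d ` {1..d})"

definition Gd' :: "nat \<Rightarrow> (nat list \<Rightarrow> nat list) set" where
  "Gd' d = derived (AutT d) (Gd d)"

definition stab1 :: "nat \<Rightarrow> (nat list \<Rightarrow> nat list) set \<Rightarrow> (nat list \<Rightarrow> nat list) set" where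
  "stab1 d H = {g \<in> H. \<forall>x \<in> {1..d}. g [x] = [x]}"

text \<open>psi_1(g) = (g|_1, ..., g|_d), tuples represented as functions on {1..d}.\<close>
definition psi1 :: "nat \<Rightarrow> (nat list \<Rightarrow> nat list) \<Rightarrow> (nat \<Rightarrow> (nat list \<Rightarrow> nat list))" where
  "psi1 d g = (\<lambda>x \<in> {1..d}. sect d g [x])"

definition spherically_transitive :: "nat \<Rightarrow> (nat list \<Rightarrow> nat list) set \<Rightarrow> bool" where
  "spherically_transitive d H \<longleftrightarrow>
     (\<forall>k. \<forall>u \<in> words d. \<forall>v \<in> words d.
        length u = k \<longrightarrow> length v = k \<longrightarrow> (\<exists>g \<in> H. g u = v))"

end

theory Submission
  imports Defs
begin

text \<open>
  Let \<open>P k = a 1 \<star> \<dots> \<star> a k\<close>. For odd \<open>d\<close> the group \<open>G\<^sub>d\<close> is fractal: the sections at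
  the vertex 1 of the elements of \<open>G\<^sub>d\<close> fixing 1 form a subgroup containing
  \<open>P (k + 1) \<star> \<iota> (P (k - 1))\<close> and \<open>a 1 \<star> \<iota> (P (d - 1))\<close>; since \<open>d - 1\<close> is even, this
  subgroup contains every \<open>P k\<close> and hence every generator. Fractalness and transitivity on
  the first level give spherical transitivity by induction on the level.

  For the branching, let \<open>B\<close> be the group of sections at 1 of the elements of \<open>G\<^sub>d\<close> that
  fix the first level and have trivial sections outside \<open>{1, 2}\<close>, and \<open>K\<close> the analogous
  group for \<open>G\<^sub>d'\<close> and the support \<open>{1}\<close>. Conjugation moves supports, so \<open>B\<close> does not
  depend on the second vertex, and by fractalness \<open>G\<^sub>d\<close> normalises \<open>B\<close> and \<open>K\<close>. The sections
  of \<open>a k \<star> a k\<close> give \<open>a k \<star> a (k + 1) \<in> B\<close> (indices mod \<open>d\<close>); as \<open>d\<close> is odd, all \<open>a k\<close>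
  are then congruent modulo \<open>B\<close> to \<open>a 1\<close> and to \<open>\<iota> (a 1)\<close>, whence \<open>G\<^sub>d = \<langle>B, P d\<rangle>\<close>. The
  commutators of these generators lie in \<open>K\<close>, so \<open>G\<^sub>d' \<subseteq> K\<close>. Conjugating by suitable
  elements, every element of \<open>G\<^sub>d'\<close> is the section at any prescribed vertex of an element
  of \<open>G\<^sub>d'\<close> with trivial sections elsewhere, and products of these realise every tuple.
\<close>

section \<open>Automorphisms of the regular rooted tree\<close>

lemma words_Nil [simp]: "[] \<in> words d"
  by (simp add: words_def)

lemma words_Cons [simp]: "x # w \<in> words d \<longleftrightarrow> x \<in> {1..d} \<and> w \<in> words d"
  by (auto simp: words_def)

lemma words_append [simp]: "u @ v \<in> words d \<longleftrightarrow> u \<in> words d \<and> v \<in> words d"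
  by (auto simp: words_def)

lemma replicate_words: "x \<in> {1..d} \<Longrightarrow> replicate k x \<in> words d"
  by (induction k) simp_all

definition root_perm :: "(nat list \<Rightarrow> nat list) \<Rightarrow> nat \<Rightarrow> nat" where
  "root_perm g x = hd (g [x])"

lemma tree_autD:
  assumes "f \<in> tree_aut d"
  shows "bij_betw f (words d) (words d)" "f \<in> extensional (words d)"
    "\<And>u. u \<in> words d \<Longrightarrow> length (f u) = length u"
    "\<And>u v. u @ v \<in> words d \<Longrightarrow> take (length u) (f (u @ v)) = f u"
  using assms by (auto simp: tree_aut_def Bij_def)

lemma tree_aut_words: "f \<in> tree_aut d \<Longrightarrow> u \<in> words d \<Longrightarrow> f u \<in> words d"
  using tree_autD(1) bij_betwE by blast

lemma tree_aut_singleton: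
  assumes f: "f \<in> tree_aut d" and x: "x \<in> {1..d}"
  shows "f [x] = [root_perm f x]" "root_perm f x \<in> {1..d}"
proof -
  have w: "[x] \<in> words d" using x by simp
  then obtain y where y: "f [x] = [y]"
    using tree_autD(3)[OF f w] by (auto simp: length_Suc_conv)
  then show "f [x] = [root_perm f x]" by (simp add: root_perm_def)
  show "root_perm f x \<in> {1..d}" using tree_aut_words[OF f w] y by (simp add: root_perm_def)
qed

lemma tree_aut_Cons:
  assumes f: "f \<in> tree_aut d" and x: "x \<in> {1..d}" and w: "w \<in> words d"
  shows "f (x # w) = root_perm f x # sect d f [x] w"
proof -
  have "take 1 (f (x # w)) = [root_perm f x]"
    using tree_autD(4)[OF f, of "[x]" w] tree_aut_singleton[OF f x] x w by simp
  moreover have "sect d f [x] w = drop 1 (f (x # w))" using w by (simp add: sect_def)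
  ultimately show ?thesis by (metis append_take_drop_id append_Cons append_Nil)
qed

lemma root_perm_inj:
  assumes f: "f \<in> tree_aut d" and "x \<in> {1..d}" "y \<in> {1..d}" "root_perm f x = root_perm f y"
  shows "x = y"
proof -
  have "f [x] = f [y]" using tree_aut_singleton[OF f] assms by metis
  moreover have "[x] \<in> words d" "[y] \<in> words d" using assms(2,3) by simp_all
  ultimately have "[x] = [y]" using tree_autD(1)[OF f] by (meson bij_betw_def inj_onD)
  then show ?thesis by simp
qed

lemma root_perm_surj:
  assumes f: "f \<in> tree_aut d" and y: "y \<in> {1..d}"
  obtains x where "x \<in> {1..d}" "root_perm f x = y"
proof -
  obtain z where z: "z \<in> words d" "f z = [y]"
    using tree_autD(1)[OF f] y by (metis bij_betw_iff_bijections words_Cons words_Nil)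
  then obtain x where "z = [x]"
    using tree_autD(3)[OF f z(1)] by (cases z) auto
  then show ?thesis using that z tree_aut_singleton[OF f] by auto
qed

lemma compose_tree_aut:
  assumes g: "g \<in> tree_aut d" and h: "h \<in> tree_aut d"
  shows "compose (words d) h g \<in> tree_aut d"
proof -
  have prefix: "take (length u) (compose (words d) h g (u @ v)) = compose (words d) h g u"
    if uv: "u @ v \<in> words d" for u v
  proof -
    have u: "u \<in> words d" using uv by simp
    define r where "r = drop (length u) (g (u @ v))"
    have guv: "g (u @ v) = g u @ r"
      unfolding r_def using tree_autD(4)[OF g uv] by (metis append_take_drop_id)
    then have "take (length (g u)) (h (g (u @ v))) = h (g u)"
      using tree_autD(4)[OF h] tree_aut_words[OF g uv] by simp
    then show ?thesis using tree_autD(3)[OF g u] uv u by (simp add: compose_eq)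
  qed
  show ?thesis
    using g h prefix
    by (auto simp: tree_aut_def compose_eq tree_aut_words intro: compose_Bij)
qed

lemma id_tree_aut: "(\<lambda>x\<in>words d. x) \<in> tree_aut d"
  by (auto simp: tree_aut_def id_Bij)

lemma inv_tree_aut:
  assumes f: "f \<in> tree_aut d"
  shows "(\<lambda>x\<in>words d. inv_into (words d) f x) \<in> tree_aut d"
proof -
  have bij: "bij_betw f (words d) (words d)" using tree_autD(1)[OF f] .
  have fi: "f (inv_into (words d) f w) = w" if "w \<in> words d" for w
    using bij that by (simp add: bij_betw_inv_into_right)
  have im: "inv_into (words d) f w \<in> words d" if "w \<in> words d" for w
    using bij that by (metis bij_betw_def inv_into_into)
  have len: "length (inv_into (words d) f w) = length w" if w: "w \<in> words d" for w
    using tree_autD(3)[OF f im[OF w]] fi[OF w] by simp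
  have prefix: "take (length u) (inv_into (words d) f (u @ v)) = inv_into (words d) f u"
    if uv: "u @ v \<in> words d" for u v
  proof -
    define w where "w = inv_into (words d) f (u @ v)"
    define w1 where "w1 = take (length u) w"
    have w: "w \<in> words d" "f w = u @ v" using im[OF uv] fi[OF uv] by (auto simp: w_def)
    have split: "w1 @ drop (length u) w = w" by (simp add: w1_def)
    then have w1: "w1 \<in> words d" using w(1) by (metis words_append)
    have "f w1 = take (length w1) (f (w1 @ drop (length u) w))"
      using tree_autD(4)[OF f] w(1) split by metis
    also have "\<dots> = u" using split w(2) len[OF uv] by (simp add: w1_def w_def)
    finally have "f w1 = u" .
    then have "inv_into (words d) f u = w1" using bij w1 by (metis bij_betw_def inv_into_f_f)
    then show ?thesis by (simp add: w1_def w_def)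
  qed
  show ?thesis
    using f prefix len im by (auto simp: tree_aut_def intro: restrict_inv_into_Bij)
qed

lemma carrier_AutT [simp]: "carrier (AutT d) = tree_aut d"
  and mult_AutT: "g \<otimes>\<^bsub>AutT d\<^esub> h = compose (words d) h g"
  and one_AutT: "\<one>\<^bsub>AutT d\<^esub> = (\<lambda>x\<in>words d. x)"
  by (simp_all add: AutT_def)

lemma group_AutT: "group (AutT d)"
proof (rule groupI)
  fix x y z
  assume "x \<in> carrier (AutT d)" "y \<in> carrier (AutT d)" "z \<in> carrier (AutT d)"
  then have "x \<in> tree_aut d" "y \<in> tree_aut d" "z \<in> tree_aut d" by simp_all
  then show "x \<otimes>\<^bsub>AutT d\<^esub> y \<in> carrier (AutT d)"
    and "x \<otimes>\<^bsub>AutT d\<^esub> y \<otimes>\<^bsub>AutT d\<^esub> z = x \<otimes>\<^bsub>AutT d\<^esub> (y \<otimes>\<^bsub>AutT d\<^esub> z)"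
    by (auto simp: mult_AutT compose_tree_aut compose_assoc tree_aut_words)
next
  show "\<one>\<^bsub>AutT d\<^esub> \<in> carrier (AutT d)" by (simp add: one_AutT id_tree_aut)
next
  fix x assume "x \<in> carrier (AutT d)"
  then show "\<one>\<^bsub>AutT d\<^esub> \<otimes>\<^bsub>AutT d\<^esub> x = x"
    using tree_autD(2) tree_aut_words
    by (fastforce simp: one_AutT mult_AutT compose_def fun_eq_iff extensional_def)
next
  fix x assume x: "x \<in> carrier (AutT d)"
  let ?y = "\<lambda>w\<in>words d. inv_into (words d) x w"
  have "bij_betw x (words d) (words d)" using x tree_autD(1) by simp
  then have "?y \<otimes>\<^bsub>AutT d\<^esub> x = \<one>\<^bsub>AutT d\<^esub>"
    by (auto simp: one_AutT mult_AutT compose_def fun_eq_iff bij_betw_inv_into_right)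
  then show "\<exists>y\<in>carrier (AutT d). y \<otimes>\<^bsub>AutT d\<^esub> x = \<one>\<^bsub>AutT d\<^esub>"
    using inv_tree_aut x by (metis carrier_AutT)
qed

lemma sect_bij:
  assumes g: "g \<in> tree_aut d" and x: "x \<in> {1..d}"
  shows "bij_betw (sect d g [x]) (words d) (words d)"
proof -
  let ?s = "sect d g [x]"
  have cons: "g (x # v) = root_perm g x # ?s v" if "v \<in> words d" for v
    using tree_aut_Cons[OF g x that] .
  have "?s v \<in> words d" if "v \<in> words d" for v
    using cons[OF that] tree_aut_words[OF g] x that by (metis words_Cons)
  moreover have "inj_on ?s (words d)"
  proof (rule inj_onI)
    fix v w assume v: "v \<in> words d" and w: "w \<in> words d" and "?s v = ?s w"
    then have "g (x # v) = g (x # w)" using cons by simp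
    then show "v = w"
      using tree_autD(1)[OF g] v w x by (metis bij_betw_def inj_onD list.inject words_Cons)
  qed
  moreover have "w \<in> ?s ` words d" if w: "w \<in> words d" for w
  proof -
    have "root_perm g x # w \<in> words d" using w tree_aut_singleton(2)[OF g x] by simp
    then obtain z where z: "z \<in> words d" "g z = root_perm g x # w"
      using tree_autD(1)[OF g] by (metis bij_betw_iff_bijections)
    then obtain x' v where zv: "z = x' # v"
      using tree_autD(3)[OF g z(1)] by (cases z) auto
    have x': "x' \<in> {1..d}" "v \<in> words d" using z(1) zv by auto
    then have "root_perm g x' = root_perm g x"
      using z(2) zv tree_aut_Cons[OF g] by fastforce
    then have "x' = x" using root_perm_inj[OF g x'(1) x] by simp
    then show "w \<in> ?s ` words d" using z(2) zv cons[OF x'(2)] x'(2) by auto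
  qed
  ultimately show ?thesis unfolding bij_betw_def by blast
qed

lemma sect_tree_aut:
  assumes g: "g \<in> tree_aut d" and x: "x \<in> {1..d}"
  shows "sect d g [x] \<in> tree_aut d"
proof -
  let ?s = "sect d g [x]"
  have len: "length (?s v) = length v" if v: "v \<in> words d" for v
    using tree_aut_Cons[OF g x v] tree_autD(3)[OF g] x v by (metis Suc_inject length_Cons words_Cons)
  have prefix: "take (length u) (?s (u @ v)) = ?s u" if uv: "u @ v \<in> words d" for u v
  proof -
    have "take (Suc (length u)) (g (x # u @ v)) = g (x # u)"
      using tree_autD(4)[OF g, of "x # u" v] uv x by simp
    moreover have "take (length u) (drop 1 l) = drop 1 (take (Suc (length u)) l)" for l :: "nat list"
      by (simp add: drop_take)
    ultimately show ?thesis using uv by (simp add: sect_def)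
  qed
  show ?thesis
    using sect_bij[OF g x] prefix len by (auto simp: tree_aut_def Bij_def sect_def)
qed

section \<open>Generating the derived subgroup\<close>

context group
begin

lemma inv_cancel_left: "x \<in> carrier G \<Longrightarrow> y \<in> carrier G \<Longrightarrow> inv x \<otimes> (x \<otimes> y) = y"
  by (simp add: m_assoc [symmetric])

lemma cancel_inv_left: "x \<in> carrier G \<Longrightarrow> y \<in> carrier G \<Longrightarrow> x \<otimes> (inv x \<otimes> y) = y"
  by (simp add: m_assoc [symmetric])

lemma inv_cancel_right: "x \<in> carrier G \<Longrightarrow> y \<in> carrier G \<Longrightarrow> x \<otimes> inv y \<otimes> y = x"
  by (simp add: m_assoc)

lemma conj_cancel: "x \<in> carrier G \<Longrightarrow> y \<in> carrier G \<Longrightarrow> x \<otimes> (inv x \<otimes> y \<otimes> x) \<otimes> inv x = y"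
  by (simp add: m_assoc cancel_inv_left)

lemma commutator_inv:
  "g \<in> carrier G \<Longrightarrow> h \<in> carrier G \<Longrightarrow>
    inv (g \<otimes> h \<otimes> inv g \<otimes> inv h) = h \<otimes> g \<otimes> inv h \<otimes> inv g"
  by (simp add: inv_mult_group m_assoc)

lemma commutator_mult_left:
  "g \<in> carrier G \<Longrightarrow> g' \<in> carrier G \<Longrightarrow> h \<in> carrier G \<Longrightarrow>
    g \<otimes> g' \<otimes> h \<otimes> inv (g \<otimes> g') \<otimes> inv h =
    g \<otimes> (g' \<otimes> h \<otimes> inv g' \<otimes> inv h) \<otimes> inv g \<otimes> (g \<otimes> h \<otimes> inv g \<otimes> inv h)"
  by (simp add: inv_mult_group m_assoc inv_cancel_left)

lemma commutator_inv_left: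
  "g \<in> carrier G \<Longrightarrow> h \<in> carrier G \<Longrightarrow>
    inv g \<otimes> h \<otimes> inv (inv g) \<otimes> inv h =
    inv g \<otimes> inv (g \<otimes> h \<otimes> inv g \<otimes> inv h) \<otimes> inv (inv g)"
  by (simp add: inv_mult_group m_assoc inv_cancel_left)

lemma subgroup_commuting_mod:
  assumes H: "subgroup H G" and K: "subgroup K G"
    and normal: "\<And>g k. g \<in> H \<Longrightarrow> k \<in> K \<Longrightarrow> g \<otimes> k \<otimes> inv g \<in> K" and h: "h \<in> H"
  shows "subgroup {g \<in> H. g \<otimes> h \<otimes> inv g \<otimes> inv h \<in> K} G"
proof (rule subgroupI)
  have HG: "x \<in> carrier G" if "x \<in> H" for x using H that by (rule subgroup.mem_carrier)
  show "{g \<in> H. g \<otimes> h \<otimes> inv g \<otimes> inv h \<in> K} \<subseteq> carrier G" using HG by blast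
  have "\<one> \<in> {g \<in> H. g \<otimes> h \<otimes> inv g \<otimes> inv h \<in> K}"
    using subgroup.one_closed[OF H] subgroup.one_closed[OF K] HG[OF h] by simp
  then show "{g \<in> H. g \<otimes> h \<otimes> inv g \<otimes> inv h \<in> K} \<noteq> {}" by blast
next
  fix g assume g: "g \<in> {g \<in> H. g \<otimes> h \<otimes> inv g \<otimes> inv h \<in> K}"
  then have gG: "g \<in> carrier G" using subgroup.mem_carrier[OF H] by blast
  from g have "inv g \<otimes> inv (g \<otimes> h \<otimes> inv g \<otimes> inv h) \<otimes> inv (inv g) \<in> K"
    by (intro normal subgroup.m_inv_closed[OF H] subgroup.m_inv_closed[OF K]) simp_all
  then have "inv g \<otimes> h \<otimes> inv (inv g) \<otimes> inv h \<in> K"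
    unfolding commutator_inv_left[OF gG subgroup.mem_carrier[OF H h]] .
  then show "inv g \<in> {g \<in> H. g \<otimes> h \<otimes> inv g \<otimes> inv h \<in> K}"
    using g subgroup.m_inv_closed[OF H] by blast
next
  fix g g' assume g: "g \<in> {g \<in> H. g \<otimes> h \<otimes> inv g \<otimes> inv h \<in> K}"
    and g': "g' \<in> {g \<in> H. g \<otimes> h \<otimes> inv g \<otimes> inv h \<in> K}"
  then have gG: "g \<in> carrier G" "g' \<in> carrier G" using subgroup.mem_carrier[OF H] by blast+
  have "g \<otimes> (g' \<otimes> h \<otimes> inv g' \<otimes> inv h) \<otimes> inv g \<in> K" using normal g g' by blast
  then have "g \<otimes> (g' \<otimes> h \<otimes> inv g' \<otimes> inv h) \<otimes> inv g \<otimes> (g \<otimes> h \<otimes> inv g \<otimes> inv h) \<in> K"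
    using g subgroup.m_closed[OF K] by blast
  then have "g \<otimes> g' \<otimes> h \<otimes> inv (g \<otimes> g') \<otimes> inv h \<in> K"
    unfolding commutator_mult_left[OF gG subgroup.mem_carrier[OF H h]] .
  then show "g \<otimes> g' \<in> {g \<in> H. g \<otimes> h \<otimes> inv g \<otimes> inv h \<in> K}"
    using g g' subgroup.m_closed[OF H] by blast
qed

text \<open>By \<open>subgroup_commuting_mod\<close> it suffices to check commutators of generators, first
  with a generator on the right and then, after swapping, with an arbitrary element.\<close>

lemma derived_generate_subset:
  assumes S: "S \<subseteq> carrier G" and K: "subgroup K G"
    and normal: "\<And>h k. h \<in> generate G S \<Longrightarrow> k \<in> K \<Longrightarrow> h \<otimes> k \<otimes> inv h \<in> K"
    and comm: "\<And>s t. s \<in> S \<Longrightarrow> t \<in> S \<Longrightarrow> s \<otimes> t \<otimes> inv s \<otimes> inv t \<in> K"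
  shows "derived G (generate G S) \<subseteq> K"
proof -
  let ?H = "generate G S"
  let ?C = "\<lambda>h. {g \<in> ?H. g \<otimes> h \<otimes> inv g \<otimes> inv h \<in> K}"
  have H: "subgroup ?H G" using generate_is_subgroup[OF S] .
  have C: "subgroup (?C h) G" if "h \<in> ?H" for h
    using H K normal that by (rule subgroup_commuting_mod)
  have swap: "h \<otimes> g \<otimes> inv h \<otimes> inv g \<in> K"
    if "g \<otimes> h \<otimes> inv g \<otimes> inv h \<in> K" "g \<in> ?H" "h \<in> ?H" for g h
    using subgroup.m_inv_closed[OF K that(1)]
    unfolding commutator_inv[OF subgroup.mem_carrier[OF H] subgroup.mem_carrier[OF H], OF that(2,3)] .
  have "?H \<subseteq> ?C t" if t: "t \<in> S" for t
    by (rule generate_subgroup_incl[OF _ C]) (use t comm generate.incl[of _ S G] in auto)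
  then have "?H \<subseteq> ?C g" if g: "g \<in> ?H" for g
    by (intro generate_subgroup_incl[OF _ C[OF g]]) (use g swap generate.incl[of _ S G] in blast)
  then have "derived_set G ?H \<subseteq> K" by blast
  then show ?thesis
    unfolding derived_def using generate_subgroup_incl[OF _ K] by blast
qed

end

section \<open>Sections of tree automorphisms\<close>

locale regular_tree =
  fixes d :: nat
begin

sublocale Aut: group "AutT d"
  by (rule group_AutT)

abbreviation aut_mult (infixl "\<star>" 70) where "g \<star> h \<equiv> g \<otimes>\<^bsub>AutT d\<^esub> h"
abbreviation aut_inv ("\<iota>") where "\<iota> g \<equiv> inv\<^bsub>AutT d\<^esub> g"
abbreviation aut_one ("\<e>") where "\<e> \<equiv> \<one>\<^bsub>AutT d\<^esub>"
abbreviation sect_at (infixl "\<down>" 90) where "g \<down> x \<equiv> sect d g [x]"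

lemmas aut_one_closed [simp] = Aut.one_closed[unfolded carrier_AutT]
lemmas aut_mult_closed [simp] = Aut.m_closed[unfolded carrier_AutT]
lemmas aut_inv_closed [simp] = Aut.inv_closed[unfolded carrier_AutT]
lemmas aut_inv_inv = Aut.inv_inv[unfolded carrier_AutT]
lemmas aut_inv_cancel_left = Aut.inv_cancel_left[unfolded carrier_AutT]
lemmas aut_cancel_inv_left = Aut.cancel_inv_left[unfolded carrier_AutT]
lemmas aut_inv_cancel_right = Aut.inv_cancel_right[unfolded carrier_AutT]
lemmas aut_conj_cancel = Aut.conj_cancel[unfolded carrier_AutT]

lemma aut_mult_apply: "u \<in> words d \<Longrightarrow> (g \<star> h) u = h (g u)"
  by (simp add: mult_AutT compose_eq)

lemma aut_inv_apply:
  assumes g: "g \<in> tree_aut d" and u: "u \<in> words d"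
  shows "(\<iota> g) (g u) = u"
proof -
  have "(\<iota> g) (g u) = (g \<star> \<iota> g) u" using aut_mult_apply[OF u] by simp
  also have "\<dots> = u" using g u by (simp add: one_AutT)
  finally show ?thesis .
qed

lemma aut_apply_inv:
  assumes "g \<in> tree_aut d" "u \<in> words d"
  shows "g ((\<iota> g) u) = u"
  using aut_inv_apply[OF aut_inv_closed[OF assms(1)] assms(2)] assms(1) by simp

lemma root_perm_mult:
  assumes "g \<in> tree_aut d" "h \<in> tree_aut d" "x \<in> {1..d}"
  shows "root_perm (g \<star> h) x = root_perm h (root_perm g x)"
  using tree_aut_singleton[OF assms(1,3)] assms(3) by (simp add: mult_AutT root_perm_def compose_eq)

lemma sect_mult:
  assumes g: "g \<in> tree_aut d" and h: "h \<in> tree_aut d" and x: "x \<in> {1..d}"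
  shows "(g \<star> h)\<down>x = g\<down>x \<star> h\<down>(root_perm g x)"
proof -
  have "(g \<star> h)\<down>x = compose (words d) (h\<down>(root_perm g x)) (g\<down>x)"
  proof
    fix v
    show "((g \<star> h)\<down>x) v = compose (words d) (h\<down>(root_perm g x)) (g\<down>x) v"
    proof (cases "v \<in> words d")
      case True
      have gxv: "(g\<down>x) v \<in> words d" using sect_tree_aut[OF g x] tree_aut_words True by blast
      have "((g \<star> h)\<down>x) v = drop 1 (h (g (x # v)))"
        using True x by (simp add: sect_def aut_mult_apply)
      also have "\<dots> = (h\<down>(root_perm g x)) ((g\<down>x) v)"
        unfolding tree_aut_Cons[OF g x True] using gxv by (simp add: sect_def)
      finally show ?thesis using gxv by (simp add: compose_eq True)
    qed (simp add: sect_def compose_def)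
  qed
  then show ?thesis by (simp add: mult_AutT)
qed

lemma root_perm_one: "x \<in> {1..d} \<Longrightarrow> root_perm \<e> x = x"
  by (simp add: one_AutT root_perm_def)

lemma sect_one: "x \<in> {1..d} \<Longrightarrow> \<e>\<down>x = \<e>"
  by (simp add: one_AutT sect_def fun_eq_iff)

lemma root_perm_inv:
  assumes g: "g \<in> tree_aut d" and x: "x \<in> {1..d}"
  shows "root_perm (\<iota> g) (root_perm g x) = x"
  using root_perm_mult[OF g aut_inv_closed[OF g] x] g x by (simp add: root_perm_one)

lemma sect_inv:
  assumes g: "g \<in> tree_aut d" and x: "x \<in> {1..d}"
  shows "(\<iota> g)\<down>(root_perm g x) = \<iota> (g\<down>x)"
proof (rule Aut.inv_equality[symmetric])
  have gx: "g\<down>x \<in> tree_aut d" using sect_tree_aut[OF g x] .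
  have igx: "(\<iota> g)\<down>(root_perm g x) \<in> tree_aut d"
    using sect_tree_aut[OF aut_inv_closed[OF g] tree_aut_singleton(2)[OF g x]] .
  have "g\<down>x \<star> (\<iota> g)\<down>(root_perm g x) = \<e>"
    using sect_mult[OF g aut_inv_closed[OF g] x] g x by (simp add: sect_one)
  then show "(\<iota> g)\<down>(root_perm g x) \<star> g\<down>x = \<e>"
    using Aut.inv_comm gx igx by simp
  show "g\<down>x \<in> carrier (AutT d)" "(\<iota> g)\<down>(root_perm g x) \<in> carrier (AutT d)"
    using gx igx by simp_all
qed

lemma sect_conj:
  assumes g: "g \<in> tree_aut d" "root_perm g x = x" and s: "s \<in> tree_aut d" and x: "x \<in> {1..d}"
  shows "root_perm (\<iota> s \<star> g \<star> s) (root_perm s x) = root_perm s x"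
    and "(\<iota> s \<star> g \<star> s)\<down>(root_perm s x) = \<iota> (s\<down>x) \<star> g\<down>x \<star> s\<down>x"
proof -
  have sx: "root_perm s x \<in> {1..d}" using tree_aut_singleton(2)[OF s x] .
  have si: "\<iota> s \<in> tree_aut d" and isg: "\<iota> s \<star> g \<in> tree_aut d"
    using s g by simp_all
  have "root_perm (\<iota> s \<star> g) (root_perm s x) = x"
    using root_perm_mult[OF si g(1) sx] root_perm_inv[OF s x] g(2) by simp
  then show "root_perm (\<iota> s \<star> g \<star> s) (root_perm s x) = root_perm s x"
    using root_perm_mult[OF isg s sx] by simp
  show "(\<iota> s \<star> g \<star> s)\<down>(root_perm s x) = \<iota> (s\<down>x) \<star> g\<down>x \<star> s\<down>x"
    using sect_mult[OF isg s sx] sect_mult[OF si g(1) sx] root_perm_mult[OF si g(1) sx]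
      root_perm_inv[OF s x] sect_inv[OF s x] g(2) by simp
qed

lemma subgroup_vertex_stab:
  assumes "subgroup H (AutT d)" "x \<in> {1..d}"
  shows "subgroup {g \<in> H. root_perm g x = x} (AutT d)"
proof (rule Aut.subgroupI)
  have HT: "g \<in> tree_aut d" if "g \<in> H" for g using subgroup.mem_carrier[OF assms(1) that] by simp
  show "{g \<in> H. root_perm g x = x} \<subseteq> carrier (AutT d)" using HT by auto
  show "{g \<in> H. root_perm g x = x} \<noteq> {}"
    using subgroup.one_closed[OF assms(1)] root_perm_one[OF assms(2)] by auto
  show "\<iota> g \<in> {g \<in> H. root_perm g x = x}" if "g \<in> {g \<in> H. root_perm g x = x}" for g
    using that root_perm_inv[OF HT assms(2)] subgroup.m_inv_closed[OF assms(1)] by force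
  show "g \<star> h \<in> {g \<in> H. root_perm g x = x}"
    if "g \<in> {g \<in> H. root_perm g x = x}" "h \<in> {g \<in> H. root_perm g x = x}" for g h
    using that root_perm_mult[OF HT HT assms(2)] subgroup.m_closed[OF assms(1)] by force
qed

lemma subgroup_sections:
  assumes H: "subgroup H (AutT d)" and x: "x \<in> {1..d}"
    and fixed: "\<And>g. g \<in> H \<Longrightarrow> root_perm g x = x"
  shows "subgroup ((\<lambda>g. g\<down>x) ` H) (AutT d)"
proof -
  have HT: "g \<in> tree_aut d" if "g \<in> H" for g using subgroup.mem_carrier[OF H that] by simp
  show ?thesis
  proof (rule Aut.subgroupI)
    show "(\<lambda>g. g\<down>x) ` H \<subseteq> carrier (AutT d)" using HT sect_tree_aut x by auto
    show "(\<lambda>g. g\<down>x) ` H \<noteq> {}" using subgroup.one_closed[OF H] by blast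
  next
    fix y assume "y \<in> (\<lambda>g. g\<down>x) ` H"
    then obtain g where "g \<in> H" "y = g\<down>x" by blast
    then show "\<iota> y \<in> (\<lambda>g. g\<down>x) ` H"
      using sect_inv[OF HT x] fixed subgroup.m_inv_closed[OF H] by (metis image_eqI)
  next
    fix y y' assume "y \<in> (\<lambda>g. g\<down>x) ` H" "y' \<in> (\<lambda>g. g\<down>x) ` H"
    then obtain g g' where "g \<in> H" "y = g\<down>x" "g' \<in> H" "y' = g'\<down>x" by blast
    then show "y \<star> y' \<in> (\<lambda>g. g\<down>x) ` H"
      using sect_mult[OF HT HT x] fixed subgroup.m_closed[OF H] by (metis image_eqI)
  qed
qed

definition stab1_supp :: "nat set \<Rightarrow> (nat list \<Rightarrow> nat list) set" where
  "stab1_supp S =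
    {g \<in> tree_aut d. (\<forall>x\<in>{1..d}. root_perm g x = x) \<and> (\<forall>x\<in>{1..d} - S. g\<down>x = \<e>)}"

lemma stab1_supp_mono: "S \<subseteq> T \<Longrightarrow> stab1_supp S \<subseteq> stab1_supp T"
  by (auto simp: stab1_supp_def)

lemma stab1_supp_shrink:
  assumes "g \<in> stab1_supp T" "\<And>x. x \<in> {1..d} \<Longrightarrow> x \<in> T \<Longrightarrow> x \<notin> S \<Longrightarrow> g\<down>x = \<e>"
  shows "g \<in> stab1_supp S"
  using assms unfolding stab1_supp_def by blast

lemma subgroup_stab1_supp: "subgroup (stab1_supp S) (AutT d)"
proof (rule Aut.subgroupI)
  show "stab1_supp S \<subseteq> carrier (AutT d)" by (auto simp: stab1_supp_def)
  have "\<e> \<in> stab1_supp S" by (simp add: stab1_supp_def root_perm_one sect_one)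
  then show "stab1_supp S \<noteq> {}" by blast
next
  fix g assume "g \<in> stab1_supp S"
  then show "\<iota> g \<in> stab1_supp S"
    using root_perm_inv sect_inv by (fastforce simp: stab1_supp_def)
next
  fix g h assume "g \<in> stab1_supp S" "h \<in> stab1_supp S"
  then show "g \<star> h \<in> stab1_supp S"
    using root_perm_mult sect_mult by (auto simp: stab1_supp_def sect_tree_aut)
qed

lemma sect_stab1_mult:
  assumes "g \<in> stab1_supp S" "h \<in> tree_aut d" "x \<in> {1..d}"
  shows "(g \<star> h)\<down>x = g\<down>x \<star> h\<down>x"
  using assms sect_mult by (simp add: stab1_supp_def)

lemma sect_stab1_inv:
  assumes "g \<in> stab1_supp S" "x \<in> {1..d}"
  shows "(\<iota> g)\<down>x = \<iota> (g\<down>x)"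
  using assms sect_inv[of g x] by (simp add: stab1_supp_def)

lemma sect_commutator_stab1:
  assumes g: "g \<in> stab1_supp S" and h: "h \<in> stab1_supp T" and x: "x \<in> {1..d}"
  shows "(g \<star> h \<star> \<iota> g \<star> \<iota> h)\<down>x = g\<down>x \<star> h\<down>x \<star> \<iota> (g\<down>x) \<star> \<iota> (h\<down>x)"
proof -
  have gU: "g \<in> stab1_supp UNIV" and hU: "h \<in> stab1_supp UNIV"
    using g h stab1_supp_mono[of _ UNIV] by auto
  note mult = subgroup.m_closed[OF subgroup_stab1_supp] and inv = subgroup.m_inv_closed[OF subgroup_stab1_supp]
  have T: "k \<in> stab1_supp UNIV \<Longrightarrow> k \<in> tree_aut d" for k by (simp add: stab1_supp_def)
  show ?thesis
    using sect_stab1_mult[OF mult[OF mult[OF gU hU] inv[OF gU]] _ x]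
      sect_stab1_mult[OF mult[OF gU hU] _ x] sect_stab1_mult[OF gU _ x]
      sect_stab1_inv[OF gU x] sect_stab1_inv[OF hU x] T gU hU by simp
qed

lemma stab1_supp_conj:
  assumes g: "g \<in> stab1_supp S" and s: "s \<in> tree_aut d"
  shows "\<iota> s \<star> g \<star> s \<in> stab1_supp (root_perm s ` S)"
proof -
  have g': "g \<in> tree_aut d" "\<And>x. x \<in> {1..d} \<Longrightarrow> root_perm g x = x"
    "\<And>x. x \<in> {1..d} \<Longrightarrow> x \<notin> S \<Longrightarrow> g\<down>x = \<e>"
    using g by (auto simp: stab1_supp_def)
  have fixed: "root_perm (\<iota> s \<star> g \<star> s) z = z"
    and supp: "z \<notin> root_perm s ` S \<Longrightarrow> (\<iota> s \<star> g \<star> s)\<down>z = \<e>" if z: "z \<in> {1..d}" for z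
  proof -
    obtain x where x: "x \<in> {1..d}" "root_perm s x = z" using root_perm_surj[OF s z] .
    then show "root_perm (\<iota> s \<star> g \<star> s) z = z" using sect_conj(1)[OF g'(1,2) s] by blast
    assume "z \<notin> root_perm s ` S"
    then have "g\<down>x = \<e>" using x g'(3) by blast
    then show "(\<iota> s \<star> g \<star> s)\<down>z = \<e>"
      using sect_conj(2)[OF g'(1) g'(2)[OF x(1)] s x(1)] x sect_tree_aut[OF s x(1)] by simp
  qed
  show ?thesis
    using fixed supp g'(1) s by (auto simp: stab1_supp_def)
qed

lemma commutator_stab1_supp:
  assumes g: "g \<in> stab1_supp S" and h: "h \<in> stab1_supp T"
  shows "g \<star> h \<star> \<iota> g \<star> \<iota> h \<in> stab1_supp (S \<inter> T)"
proof (rule stab1_supp_shrink)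
  have "g \<in> stab1_supp (S \<union> T)" "h \<in> stab1_supp (S \<union> T)"
    using g h stab1_supp_mono[of _ "S \<union> T"] by auto
  then show "g \<star> h \<star> \<iota> g \<star> \<iota> h \<in> stab1_supp (S \<union> T)"
    by (simp add: subgroup.m_closed[OF subgroup_stab1_supp] subgroup.m_inv_closed[OF subgroup_stab1_supp])
  show "(g \<star> h \<star> \<iota> g \<star> \<iota> h)\<down>x = \<e>" if x: "x \<in> {1..d}" "x \<in> S \<union> T" "x \<notin> S \<inter> T" for x
  proof -
    have "g\<down>x \<in> tree_aut d" "h\<down>x \<in> tree_aut d" "g\<down>x = \<e> \<or> h\<down>x = \<e>"
      using g h x by (auto simp: stab1_supp_def sect_tree_aut)
    then show ?thesis using sect_commutator_stab1[OF g h x(1)] by auto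
  qed
qed

lemma commutator_stab1_supp_fixing:
  assumes g: "g \<in> stab1_supp {x, z}" and x: "x \<in> {1..d}" and z: "z \<in> {1..d}"
    and y: "y \<in> tree_aut d" "root_perm y x = x" "root_perm y z = z" "y\<down>z = \<e>"
  shows "g \<star> y \<star> \<iota> g \<star> \<iota> y \<in> stab1_supp {x}"
    and "(g \<star> y \<star> \<iota> g \<star> \<iota> y)\<down>x = g\<down>x \<star> y\<down>x \<star> \<iota> (g\<down>x) \<star> \<iota> (y\<down>x)"
proof -
  have gT: "g \<in> tree_aut d" and gi: "\<iota> g \<in> stab1_supp {x, z}"
    using g subgroup.m_inv_closed[OF subgroup_stab1_supp g] by (simp_all add: stab1_supp_def)
  have gi_fix: "root_perm (\<iota> g) v = v" if "v \<in> {1..d}" for v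
    using gi that by (simp add: stab1_supp_def)
  have s: "root_perm (\<iota> y) x = x" "root_perm (\<iota> y) z = z" "(\<iota> y)\<down>x = \<iota> (y\<down>x)" "(\<iota> y)\<down>z = \<e>"
    using root_perm_inv[OF y(1) x] root_perm_inv[OF y(1) z] sect_inv[OF y(1) x] sect_inv[OF y(1) z]
      y by simp_all
  define c where "c = \<iota> (\<iota> y) \<star> \<iota> g \<star> \<iota> y"
  have c: "c \<in> stab1_supp {x, z}"
    using stab1_supp_conj[OF gi aut_inv_closed[OF y(1)]] s by (simp add: c_def)
  then have cT: "c \<in> tree_aut d" by (simp add: stab1_supp_def)
  have cx: "c\<down>x = y\<down>x \<star> \<iota> (g\<down>x) \<star> \<iota> (y\<down>x)"
    using sect_conj(2)[OF aut_inv_closed[OF gT] gi_fix aut_inv_closed[OF y(1)] x]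
      s sect_stab1_inv[OF g x] sect_tree_aut[OF y(1) x] x by (simp add: c_def)
  have cz: "c\<down>z = \<iota> (g\<down>z)"
    using sect_conj(2)[OF aut_inv_closed[OF gT] gi_fix aut_inv_closed[OF y(1)] z]
      s sect_stab1_inv[OF g z] sect_tree_aut[OF gT z] z by (simp add: c_def)
  have comm: "g \<star> y \<star> \<iota> g \<star> \<iota> y = g \<star> c" using gT y(1) by (simp add: c_def Aut.m_assoc)
  show "g \<star> y \<star> \<iota> g \<star> \<iota> y \<in> stab1_supp {x}"
    unfolding comm
  proof (rule stab1_supp_shrink)
    show "g \<star> c \<in> stab1_supp {x, z}" using subgroup.m_closed[OF subgroup_stab1_supp g c] .
    show "(g \<star> c)\<down>v = \<e>" if "v \<in> {1..d}" "v \<in> {x, z}" "v \<notin> {x}" for v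
      using that sect_stab1_mult[OF g cT z] cz sect_tree_aut[OF gT z] by auto
  qed
  show "(g \<star> y \<star> \<iota> g \<star> \<iota> y)\<down>x = g\<down>x \<star> y\<down>x \<star> \<iota> (g\<down>x) \<star> \<iota> (y\<down>x)"
    unfolding comm using sect_stab1_mult[OF g cT x] cx sect_tree_aut[OF gT x] sect_tree_aut[OF y(1) x]
    by (simp add: Aut.m_assoc)
qed

definition sections_at :: "nat \<Rightarrow> (nat list \<Rightarrow> nat list) set \<Rightarrow> nat set \<Rightarrow> (nat list \<Rightarrow> nat list) set"
  where "sections_at x H S = (\<lambda>g. g\<down>x) ` (H \<inter> stab1_supp S)"

lemma sections_atI: "g \<in> H \<Longrightarrow> g \<in> stab1_supp S \<Longrightarrow> g\<down>x = y \<Longrightarrow> y \<in> sections_at x H S"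
  unfolding sections_at_def by blast

lemma sections_at_tree_aut: "x \<in> {1..d} \<Longrightarrow> y \<in> sections_at x H S \<Longrightarrow> y \<in> tree_aut d"
  by (auto simp: sections_at_def stab1_supp_def sect_tree_aut)

lemma subgroup_sections_at:
  assumes "subgroup H (AutT d)" "x \<in> {1..d}"
  shows "subgroup (sections_at x H S) (AutT d)"
  unfolding sections_at_def
  by (intro subgroup_sections Aut.subgroups_Inter_pair assms subgroup_stab1_supp)
    (use assms(2) in \<open>auto simp: stab1_supp_def\<close>)

lemma sections_at_conj:
  assumes H: "\<And>g. g \<in> H \<Longrightarrow> \<iota> s \<star> g \<star> s \<in> H" and s: "s \<in> tree_aut d"
    and x: "x \<in> {1..d}" and y: "y \<in> sections_at x H S"
  shows "\<iota> (s\<down>x) \<star> y \<star> s\<down>x \<in> sections_at (root_perm s x) H (root_perm s ` S)"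
proof -
  obtain g where g: "g \<in> H" "g \<in> stab1_supp S" "y = g\<down>x"
    using y by (auto simp: sections_at_def)
  have "(\<iota> s \<star> g \<star> s)\<down>(root_perm s x) = \<iota> (s\<down>x) \<star> y \<star> s\<down>x"
    using sect_conj(2)[OF _ _ s x] g x by (simp add: stab1_supp_def)
  then show ?thesis by (rule sections_atI[OF H[OF g(1)] stab1_supp_conj[OF g(2) s]])
qed

end

section \<open>The group \<open>G\<^sub>d\<close>\<close>

locale Gd_tree = regular_tree +
  assumes three_le_d: "3 \<le> d"
begin

abbreviation a :: "nat \<Rightarrow> nat list \<Rightarrow> nat list" where "a \<equiv> gen_a d"

lemma one_in_range: "1 \<in> {1..d}" and d_in_range: "d \<in> {1..d}" and two_in_range: "2 \<in> {1..d}"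
  using three_le_d by simp_all

lemma nxt_in_range: "nxt d i \<in> {1..d}"
proof -
  have "i mod d < d" using three_le_d by simp
  then show ?thesis by (simp add: nxt_def)
qed

lemma nxt_neq: "i \<in> {1..d} \<Longrightarrow> nxt d i \<noteq> i"
  using three_le_d by (cases "i = d") (auto simp: nxt_def)

lemma nxt_less: "i < d \<Longrightarrow> nxt d i = Suc i"
  by (simp add: nxt_def)

lemma nxt_self: "nxt d d = 1"
  by (simp add: nxt_def)

lemma act_words: "i \<in> {1..d} \<Longrightarrow> w \<in> words d \<Longrightarrow> act d i w \<in> words d"
proof (induction w arbitrary: i)
  case (Cons x w)
  then show ?case using nxt_in_range by auto
qed simp

lemma act_length: "length (act d i w) = length w"
  by (induction w arbitrary: i) auto

lemma act_prefix: "take (length u) (act d i (u @ v)) = act d i u"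
  by (induction u arbitrary: i) auto

lemma act_inj:
  "i \<in> {1..d} \<Longrightarrow> v \<in> words d \<Longrightarrow> w \<in> words d \<Longrightarrow> act d i v = act d i w \<Longrightarrow> v = w"
proof (induction v arbitrary: i w)
  case Nil
  then show ?case by (cases w) (auto split: if_splits)
next
  case (Cons x v)
  then obtain y w' where "w = y # w'" by (cases w) (auto split: if_splits)
  then show ?case
    using Cons.prems Cons.IH[of i w'] Cons.IH[of "nxt d i" w']
      nxt_neq[OF Cons.prems(1)] nxt_in_range
    by (auto split: if_splits)
qed

lemma act_surj: "i \<in> {1..d} \<Longrightarrow> w \<in> words d \<Longrightarrow> \<exists>v\<in>words d. act d i v = w"
proof (induction w arbitrary: i)
  case Nil
  then show ?case by (intro bexI[of _ "[]"]) auto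
next
  case (Cons y w)
  have i: "nxt d i \<noteq> i" "nxt d i \<in> {1..d}" using nxt_neq[OF Cons.prems(1)] nxt_in_range by simp_all
  have w: "w \<in> words d" using Cons.prems by simp
  consider "y = nxt d i" | "y = i" | "y \<noteq> i" "y \<noteq> nxt d i" by blast
  then show ?case
  proof cases
    case 1
    obtain v where "v \<in> words d" "act d i v = w" using Cons.IH[OF Cons.prems(1) w] by blast
    then show ?thesis using 1 Cons.prems i by (intro bexI[of _ "i # v"]) auto
  next
    case 2
    obtain v where "v \<in> words d" "act d (nxt d i) v = w" using Cons.IH[OF i(2) w] by blast
    then show ?thesis using 2 i by (intro bexI[of _ "nxt d i # v"]) auto
  next
    case 3
    then show ?thesis using Cons.prems by (intro bexI[of _ "y # w"]) auto
  qed
qed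

lemma gen_a_tree_aut:
  assumes i: "i \<in> {1..d}"
  shows "a i \<in> tree_aut d"
proof -
  have "bij_betw (act d i) (words d) (words d)"
    unfolding bij_betw_def inj_on_def
    using act_inj[OF i] act_surj[OF i] act_words[OF i] by blast
  then have "bij_betw (a i) (words d) (words d)"
    unfolding gen_a_def by (rule bij_betw_cong[THEN iffD1, rotated]) simp
  then show ?thesis
    unfolding tree_aut_def Bij_def by (auto simp: gen_a_def act_length act_prefix)
qed

lemma root_perm_gen_a:
  "i \<in> {1..d} \<Longrightarrow> x \<in> {1..d} \<Longrightarrow>
    root_perm (a i) x = (if x = i then nxt d i else if x = nxt d i then i else x)"
  by (auto simp: root_perm_def gen_a_def)

lemma sect_gen_a:
  "i \<in> {1..d} \<Longrightarrow> x \<in> {1..d} \<Longrightarrow>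
    (a i)\<down>x = (if x = i then a i else if x = nxt d i then a (nxt d i) else \<e>)"
  by (auto simp: sect_def gen_a_def one_AutT fun_eq_iff)

lemma subgroup_Gd: "subgroup (Gd d) (AutT d)"
  unfolding Gd_def using gen_a_tree_aut by (intro Aut.generate_is_subgroup) auto

lemma Gd_tree_aut: "g \<in> Gd d \<Longrightarrow> g \<in> tree_aut d"
  using subgroup.mem_carrier[OF subgroup_Gd] by simp

lemma gen_a_in_Gd: "i \<in> {1..d} \<Longrightarrow> a i \<in> Gd d"
  unfolding Gd_def by (rule generate.incl) simp

lemmas Gd_one = subgroup.one_closed[OF subgroup_Gd]
lemmas Gd_mult = subgroup.m_closed[OF subgroup_Gd]
lemmas Gd_inv = subgroup.m_inv_closed[OF subgroup_Gd]

lemma Gd_conj: "s \<in> Gd d \<Longrightarrow> g \<in> Gd d \<Longrightarrow> \<iota> s \<star> g \<star> s \<in> Gd d"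
  by (intro Gd_mult Gd_inv)

lemma sect_gen_a_in_Gd: "i \<in> {1..d} \<Longrightarrow> x \<in> {1..d} \<Longrightarrow> (a i)\<down>x \<in> Gd d"
  using sect_gen_a gen_a_in_Gd nxt_in_range Gd_one by simp

lemma sect_in_Gd:
  assumes "g \<in> Gd d" "x \<in> {1..d}"
  shows "g\<down>x \<in> Gd d"
  using assms unfolding Gd_def
proof (induction arbitrary: x rule: generate.induct)
  case one
  then show ?case using sect_one Gd_one by (simp add: Gd_def)
next
  case (incl g)
  then show ?case using sect_gen_a_in_Gd by (auto simp: Gd_def)
next
  case (inv g)
  then obtain i where i: "i \<in> {1..d}" "g = a i" by blast
  obtain y where y: "y \<in> {1..d}" "root_perm g y = x"
    using root_perm_surj[OF gen_a_tree_aut[OF i(1)] inv.prems] i(2) by blast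
  then show ?case
    using sect_inv[OF gen_a_tree_aut[OF i(1)] y(1)] sect_gen_a_in_Gd[OF i(1) y(1)] i(2) Gd_inv
    by (simp add: Gd_def)
next
  case (eng g h)
  then show ?case
    using sect_mult[OF Gd_tree_aut Gd_tree_aut] tree_aut_singleton(2)[OF Gd_tree_aut] Gd_mult
    by (simp add: Gd_def)
qed

primrec gen_prod :: "nat \<Rightarrow> nat list \<Rightarrow> nat list" where
  "gen_prod 0 = \<e>"
| "gen_prod (Suc k) = gen_prod k \<star> a (Suc k)"

lemma gen_prod_in_Gd: "k \<le> d \<Longrightarrow> gen_prod k \<in> Gd d"
  by (induction k) (auto simp: Gd_one Gd_mult gen_a_in_Gd)

lemma gen_prod_tree_aut: "k \<le> d \<Longrightarrow> gen_prod k \<in> tree_aut d"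
  using gen_prod_in_Gd Gd_tree_aut by blast

lemma gen_prod_at_1: "k < d \<Longrightarrow> root_perm (gen_prod k) 1 = Suc k \<and> (gen_prod k)\<down>1 = gen_prod k"
proof (induction k)
  case 0
  then show ?case by (simp add: root_perm_one sect_one)
next
  case (Suc k)
  have k: "Suc k \<in> {1..d}" using Suc.prems by simp
  show ?case
    using root_perm_mult[OF gen_prod_tree_aut gen_a_tree_aut[OF k]]
      sect_mult[OF gen_prod_tree_aut gen_a_tree_aut[OF k]] Suc
      root_perm_gen_a[OF k k] sect_gen_a[OF k k] nxt_less
    by simp
qed

lemma gen_prod_at_2: "1 \<le> k \<Longrightarrow> k < d \<Longrightarrow> root_perm (gen_prod k) 2 = 1 \<and> (gen_prod k)\<down>2 = a 2"
proof (induction k)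
  case (Suc k)
  have k: "Suc k \<in> {1..d}" using Suc.prems by simp
  have step: "root_perm (gen_prod (Suc k)) 2 = root_perm (a (Suc k)) (root_perm (gen_prod k) 2)"
    "(gen_prod (Suc k))\<down>2 = (gen_prod k)\<down>2 \<star> (a (Suc k))\<down>(root_perm (gen_prod k) 2)"
    using root_perm_mult[OF gen_prod_tree_aut gen_a_tree_aut[OF k] two_in_range]
      sect_mult[OF gen_prod_tree_aut gen_a_tree_aut[OF k] two_in_range] Suc.prems by simp_all
  show ?case
  proof (cases "k = 0")
    case True
    then show ?thesis
      using step root_perm_gen_a[OF k two_in_range] sect_gen_a[OF k two_in_range] nxt_less three_le_d
      by (simp add: root_perm_one sect_one gen_a_tree_aut numeral_2_eq_2)
  next
    case False
    then show ?thesis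
      using step Suc root_perm_gen_a[OF k] sect_gen_a[OF k] nxt_less[of "Suc k"]
      by (simp add: gen_a_tree_aut)
  qed
qed simp

lemma Gd_transitive_level1:
  assumes "x \<in> {1..d}"
  obtains t where "t \<in> Gd d" "root_perm t 1 = x"
proof -
  have "x - 1 < d" using assms by auto
  then show ?thesis
    using that[OF gen_prod_in_Gd[of "x - 1"]] gen_prod_at_1[of "x - 1"] assms by auto
qed

lemma gen_prod_lift:
  defines "y \<equiv> gen_prod (d - 1) \<star> \<iota> (a 1) \<star> a d"
  shows "y \<in> Gd d" "root_perm y 1 = 1" "y\<down>1 = gen_prod d" "root_perm y 2 = 2" "y\<down>2 = \<e>"
proof -
  note one = one_in_range and two = two_in_range and dd = d_in_range
  let ?p = "gen_prod (d - 1)"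
  have T: "?p \<in> tree_aut d" "a 1 \<in> tree_aut d" "a d \<in> tree_aut d" "\<iota> (a 1) \<in> tree_aut d"
    using gen_prod_tree_aut gen_a_tree_aut one dd by simp_all
  have pia: "?p \<star> \<iota> (a 1) \<in> tree_aut d" using T by simp
  have p1: "root_perm ?p 1 = d" "?p\<down>1 = ?p" and p2: "root_perm ?p 2 = 1" "?p\<down>2 = a 2"
    using gen_prod_at_1[of "d - 1"] gen_prod_at_2[of "d - 1"] three_le_d by simp_all
  have n1: "nxt d 1 = 2" using nxt_less three_le_d by simp
  have a1: "root_perm (a 1) d = d" "(a 1)\<down>d = \<e>" "root_perm (a 1) 2 = 1" "(a 1)\<down>2 = a 2"
    using root_perm_gen_a[OF one dd] sect_gen_a[OF one dd] root_perm_gen_a[OF one two]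
      sect_gen_a[OF one two] n1 three_le_d by simp_all
  have ia1: "root_perm (\<iota> (a 1)) d = d" "(\<iota> (a 1))\<down>d = \<e>"
    "root_perm (\<iota> (a 1)) 1 = 2" "(\<iota> (a 1))\<down>1 = \<iota> (a 2)"
    using root_perm_inv[OF T(2) dd] sect_inv[OF T(2) dd] root_perm_inv[OF T(2) two]
      sect_inv[OF T(2) two] a1 by simp_all
  have ad: "root_perm (a d) d = 1" "(a d)\<down>d = a d" "root_perm (a d) 2 = 2" "(a d)\<down>2 = \<e>"
    using root_perm_gen_a[OF dd dd] sect_gen_a[OF dd dd] root_perm_gen_a[OF dd two]
      sect_gen_a[OF dd two] nxt_self three_le_d by simp_all
  have "gen_prod d = ?p \<star> a d" using gen_prod.simps(2)[of "d - 1"] three_le_d by simp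
  then show "root_perm y 1 = 1" "y\<down>1 = gen_prod d"
    unfolding y_def
    using root_perm_mult[OF pia T(3) one] root_perm_mult[OF T(1,4) one]
      sect_mult[OF pia T(3) one] sect_mult[OF T(1,4) one] p1 ia1 ad T by simp_all
  show "root_perm y 2 = 2" "y\<down>2 = \<e>"
    unfolding y_def
    using root_perm_mult[OF pia T(3) two] root_perm_mult[OF T(1,4) two]
      sect_mult[OF pia T(3) two] sect_mult[OF T(1,4) two] p2 ia1 ad T gen_a_tree_aut[OF two]
    by simp_all
  show "y \<in> Gd d"
    unfolding y_def using gen_prod_in_Gd gen_a_in_Gd one dd by (simp add: Gd_mult Gd_inv)
qed

lemma subgroup_Gd': "subgroup (Gd' d) (AutT d)"
  unfolding Gd'_def using Aut.derived_is_subgroup subgroup.subset[OF subgroup_Gd] by blast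

lemma Gd'_subset: "Gd' d \<subseteq> Gd d"
  unfolding Gd'_def using Aut.derived_incl[OF order_refl subgroup_Gd] .

lemma commutator_in_Gd': "g \<in> Gd d \<Longrightarrow> h \<in> Gd d \<Longrightarrow> g \<star> h \<star> \<iota> g \<star> \<iota> h \<in> Gd' d"
  unfolding Gd'_def derived_def by (rule generate.incl) blast

lemma Gd'_conj:
  assumes g: "g \<in> Gd d" and y: "y \<in> Gd' d"
  shows "g \<star> y \<star> \<iota> g \<in> Gd' d"
proof -
  have "Gd' d \<lhd> AutT d\<lparr>carrier := Gd d\<rparr>"
    unfolding Gd'_def using Aut.derived_subgroup_is_normal[OF subgroup_Gd] .
  then show ?thesis
    using normal.inv_op_closed2[of "Gd' d" "AutT d\<lparr>carrier := Gd d\<rparr>" g y] g y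
    by (simp add: Aut.m_inv_consistent[OF subgroup_Gd g])
qed

lemma Gd'_conj_inv: "g \<in> Gd d \<Longrightarrow> y \<in> Gd' d \<Longrightarrow> \<iota> g \<star> y \<star> g \<in> Gd' d"
  using Gd'_conj[OF Gd_inv] Gd_tree_aut by (metis aut_inv_inv)

abbreviation B where "B \<equiv> sections_at 1 (Gd d) {1, 2}"

lemma subgroup_B: "subgroup B (AutT d)"
  using subgroup_sections_at[OF subgroup_Gd] three_le_d by simp

lemma B_subset_Gd: "B \<subseteq> Gd d"
  using sect_in_Gd three_le_d by (auto simp: sections_at_def)

lemma sections_at_1_swap:
  assumes k: "2 \<le> k" "k < d"
  shows "sections_at 1 (Gd d) {1, k} \<subseteq> sections_at 1 (Gd d) {1, Suc k}"
    and "sections_at 1 (Gd d) {1, Suc k} \<subseteq> sections_at 1 (Gd d) {1, k}"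
proof -
  have kd: "k \<in> {1..d}" and one: "1 \<in> {1..d}" using k by simp_all
  have perm: "root_perm (a k) 1 = 1" "root_perm (a k) k = Suc k" "root_perm (a k) (Suc k) = k"
    and sect1: "(a k)\<down>1 = \<e>"
    using root_perm_gen_a[OF kd] sect_gen_a[OF kd one] nxt_less k by auto
  have conj: "y \<in> sections_at 1 (Gd d) (root_perm (a k) ` S)" if "y \<in> sections_at 1 (Gd d) S" for y S
    using sections_at_conj[OF _ gen_a_tree_aut[OF kd] one that] Gd_mult Gd_inv gen_a_in_Gd[OF kd]
      perm sect1 sections_at_tree_aut[OF one that] by (simp add: Gd_tree_aut)
  show "sections_at 1 (Gd d) {1, k} \<subseteq> sections_at 1 (Gd d) {1, Suc k}"
    using conj[of _ "{1, k}"] perm by auto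
  show "sections_at 1 (Gd d) {1, Suc k} \<subseteq> sections_at 1 (Gd d) {1, k}"
    using conj[of _ "{1, Suc k}"] perm by auto
qed

lemma sections_at_1_eq_B:
  assumes "2 \<le> k" "k \<le> d"
  shows "sections_at 1 (Gd d) {1, k} = B"
  using assms
proof (induction k rule: dec_induct)
  case (step n)
  then show ?case using sections_at_1_swap[of n] by auto
qed simp

end

section \<open>Fractalness and spherical transitivity\<close>

locale Gd_odd = Gd_tree +
  assumes odd_d: "odd d"
begin

abbreviation vertex1_sections where
  "vertex1_sections \<equiv> (\<lambda>g. g\<down>1) ` {g \<in> Gd d. root_perm g 1 = 1}"

lemma subgroup_vertex1_sections: "subgroup vertex1_sections (AutT d)"
  by (rule subgroup_sections[OF subgroup_vertex_stab[OF subgroup_Gd one_in_range] one_in_range]) simp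

lemmas vertex1_sections_mult = subgroup.m_closed[OF subgroup_vertex1_sections]
lemmas vertex1_sections_inv = subgroup.m_inv_closed[OF subgroup_vertex1_sections]

lemma vertex1_sectionsI: "s \<in> Gd d \<Longrightarrow> root_perm s 1 = 1 \<Longrightarrow> s\<down>1 \<in> vertex1_sections"
  by blast

lemma gen_prod_shift:
  assumes i: "1 \<le> i" "i < d"
  shows "gen_prod (Suc i) \<star> \<iota> (gen_prod (i - 1)) \<in> vertex1_sections"
proof -
  let ?p = "gen_prod i" and ?q = "gen_prod (i - 1)"
  have iI: "i \<in> {1..d}" "Suc i \<in> {1..d}" using i by simp_all
  have T: "?p \<in> tree_aut d" "a i \<in> tree_aut d" "?q \<in> tree_aut d"
    using gen_prod_tree_aut gen_a_tree_aut iI i by simp_all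
  have p: "root_perm ?p 1 = Suc i" "?p\<down>1 = ?p" using gen_prod_at_1 i by simp_all
  have q: "root_perm ?q 1 = i" "?q\<down>1 = ?q" using gen_prod_at_1[of "i - 1"] i by simp_all
  have ai: "root_perm (a i) (Suc i) = i" "(a i)\<down>(Suc i) = a (Suc i)"
    using root_perm_gen_a[OF iI] sect_gen_a[OF iI] nxt_less i by simp_all
  have qi: "root_perm (\<iota> ?q) i = 1" "(\<iota> ?q)\<down>i = \<iota> ?q"
    using root_perm_inv[OF T(3) one_in_range] sect_inv[OF T(3) one_in_range] q by simp_all
  have pa: "?p \<star> a i \<in> tree_aut d" "root_perm (?p \<star> a i) 1 = i"
    "(?p \<star> a i)\<down>1 = gen_prod (Suc i)"
    using root_perm_mult[OF T(1,2) one_in_range] sect_mult[OF T(1,2) one_in_range] T p ai by simp_all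
  have "root_perm (?p \<star> a i \<star> \<iota> ?q) 1 = 1"
    "(?p \<star> a i \<star> \<iota> ?q)\<down>1 = gen_prod (Suc i) \<star> \<iota> (gen_prod (i - 1))"
    using root_perm_mult[OF pa(1) _ one_in_range, of "\<iota> ?q"]
      sect_mult[OF pa(1) _ one_in_range, of "\<iota> ?q"] T pa qi by simp_all
  moreover have "?p \<star> a i \<star> \<iota> ?q \<in> Gd d"
    using gen_prod_in_Gd gen_a_in_Gd Gd_mult Gd_inv iI i by simp
  ultimately show ?thesis using vertex1_sectionsI[of "?p \<star> a i \<star> \<iota> ?q"] by simp
qed

lemma gen_a_1_shift: "a 1 \<star> \<iota> (gen_prod (d - 1)) \<in> vertex1_sections"
proof -
  let ?q = "gen_prod (d - 1)"
  have T: "a d \<in> tree_aut d" "?q \<in> tree_aut d"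
    using gen_prod_tree_aut gen_a_tree_aut d_in_range by simp_all
  have q: "root_perm ?q 1 = d" "?q\<down>1 = ?q" using gen_prod_at_1[of "d - 1"] three_le_d by simp_all
  have ad: "root_perm (a d) 1 = d" "(a d)\<down>1 = a 1"
    using root_perm_gen_a[OF d_in_range one_in_range] sect_gen_a[OF d_in_range one_in_range]
      nxt_self three_le_d by simp_all
  have qi: "root_perm (\<iota> ?q) d = 1" "(\<iota> ?q)\<down>d = \<iota> ?q"
    using root_perm_inv[OF T(2) one_in_range] sect_inv[OF T(2) one_in_range] q by simp_all
  have "root_perm (a d \<star> \<iota> ?q) 1 = 1" "(a d \<star> \<iota> ?q)\<down>1 = a 1 \<star> \<iota> ?q"
    using root_perm_mult[OF T(1) _ one_in_range, of "\<iota> ?q"]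
      sect_mult[OF T(1) _ one_in_range, of "\<iota> ?q"] T ad qi by simp_all
  moreover have "a d \<star> \<iota> ?q \<in> Gd d"
    using gen_prod_in_Gd gen_a_in_Gd Gd_mult Gd_inv d_in_range by simp
  ultimately show ?thesis using vertex1_sectionsI[of "a d \<star> \<iota> ?q"] by simp
qed

lemma gen_prod_step:
  assumes "1 \<le> i" "i < d" "gen_prod (i - 1) \<in> vertex1_sections"
  shows "gen_prod (Suc i) \<in> vertex1_sections"
proof -
  have "gen_prod (Suc i) \<star> \<iota> (gen_prod (i - 1)) \<star> gen_prod (i - 1) \<in> vertex1_sections"
    using vertex1_sections_mult[OF gen_prod_shift assms(3)] assms(1,2) .
  moreover have "gen_prod (Suc i) \<star> \<iota> (gen_prod (i - 1)) \<star> gen_prod (i - 1) = gen_prod (Suc i)"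
    using assms(1,2) by (intro aut_inv_cancel_right gen_prod_tree_aut) auto
  ultimately show ?thesis by simp
qed

lemma gen_prod_even: "2 * m \<le> d \<Longrightarrow> gen_prod (2 * m) \<in> vertex1_sections"
proof (induction m)
  case 0
  then show ?case using subgroup.one_closed[OF subgroup_vertex1_sections] by simp
next
  case (Suc m)
  then show ?case using gen_prod_step[of "2 * m + 1"] odd_d by (simp add: numeral_2_eq_2)
qed

lemma gen_prod_odd: "2 * m + 1 \<le> d \<Longrightarrow> gen_prod (2 * m + 1) \<in> vertex1_sections"
proof (induction m)
  case 0
  \<comment> \<open>\<open>a 1\<close> is reached through \<open>gen_prod (d - 1)\<close>, which is covered since \<open>d - 1\<close> is even.\<close>
  have "a 1 \<star> \<iota> (gen_prod (d - 1)) \<star> gen_prod (d - 1) \<in> vertex1_sections"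
    using vertex1_sections_mult[OF gen_a_1_shift gen_prod_even[of "(d - 1) div 2"]] odd_d by simp
  then show ?case
    using gen_prod_tree_aut[of "d - 1"] gen_a_tree_aut[OF one_in_range] by (simp add: Aut.m_assoc)
next
  case (Suc m)
  then show ?case using gen_prod_step[of "2 * m + 2"] by (simp add: numeral_2_eq_2)
qed

lemma gen_prod_in_vertex1_sections: "k \<le> d \<Longrightarrow> gen_prod k \<in> vertex1_sections"
  using gen_prod_even[of "k div 2"] gen_prod_odd[of "k div 2"] by (cases "even k") auto

theorem Gd_fractal: "Gd d \<subseteq> vertex1_sections"
proof -
  have "a k \<in> vertex1_sections" if k: "k \<in> {1..d}" for k
  proof -
    have "\<iota> (gen_prod (k - 1)) \<star> gen_prod k \<in> vertex1_sections"
      using k by (intro vertex1_sections_mult vertex1_sections_inv gen_prod_in_vertex1_sections) auto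
    moreover have "gen_prod k = gen_prod (k - 1) \<star> a k"
      using k gen_prod.simps(2)[of "k - 1"] by (cases k) auto
    moreover have "gen_prod (k - 1) \<in> tree_aut d" using k by (intro gen_prod_tree_aut) auto
    ultimately show ?thesis
      using aut_inv_cancel_left gen_a_tree_aut[OF k] by simp
  qed
  then have "a ` {1..d} \<subseteq> vertex1_sections" by blast
  then show ?thesis
    using Aut.generate_subgroup_incl[OF _ subgroup_vertex1_sections] by (simp only: Gd_def)
qed

lemma Gd_fractalE:
  assumes "h \<in> Gd d"
  obtains s where "s \<in> Gd d" "root_perm s 1 = 1" "s\<down>1 = h"
  using Gd_fractal assms that by blast

lemma Gd_orbit_ones: "u \<in> words d \<Longrightarrow> length u = k \<Longrightarrow> \<exists>g\<in>Gd d. g (replicate k 1) = u"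
proof (induction k arbitrary: u)
  case 0
  then show ?case using Gd_one by (intro bexI[of _ \<e>]) (simp_all add: one_AutT)
next
  case (Suc k)
  then obtain x u' where xu: "u = x # u'" by (cases u) auto
  have x: "x \<in> {1..d}" and u: "u' \<in> words d" "length u' = k" using Suc.prems xu by simp_all
  obtain t where t: "t \<in> Gd d" "root_perm t 1 = x" using Gd_transitive_level1[OF x] .
  have t1: "t\<down>1 \<in> tree_aut d" using sect_tree_aut[OF Gd_tree_aut[OF t(1)] one_in_range] .
  define w where "w = (\<iota> (t\<down>1)) u'"
  have w: "w \<in> words d" "length w = k"
    using tree_aut_words[OF _ u(1)] tree_autD(3)[OF _ u(1)] aut_inv_closed[OF t1] u(2)
    by (simp_all add: w_def)
  obtain h where h: "h \<in> Gd d" "h (replicate k 1) = w" using Suc.IH[OF w] by blast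
  obtain s where s: "s \<in> Gd d" "root_perm s 1 = 1" "s\<down>1 = h" using Gd_fractalE[OF h(1)] .
  have ones: "replicate k 1 \<in> words d" using one_in_range by (rule replicate_words)
  have "(s \<star> t) (replicate (Suc k) 1) = t (s (1 # replicate k 1))"
    using ones one_in_range by (simp add: aut_mult_apply)
  also have "\<dots> = t (1 # w)"
    using tree_aut_Cons[OF Gd_tree_aut[OF s(1)] one_in_range ones] s h by simp
  also have "\<dots> = u"
    using tree_aut_Cons[OF Gd_tree_aut[OF t(1)] one_in_range w(1)] t aut_apply_inv[OF t1 u(1)] xu
    by (simp add: w_def)
  finally show ?case using Gd_mult[OF s(1) t(1)] by blast
qed

theorem spherically_transitive_Gd: "spherically_transitive d (Gd d)"
  unfolding spherically_transitive_def
proof (intro allI ballI impI)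
  fix k u v assume u: "u \<in> words d" and v: "v \<in> words d" and "length u = k" "length v = k"
  then obtain g h where g: "g \<in> Gd d" "g (replicate k 1) = u" and h: "h \<in> Gd d" "h (replicate k 1) = v"
    using Gd_orbit_ones by metis
  have "replicate k 1 \<in> words d" using one_in_range by (rule replicate_words)
  then have "(\<iota> g \<star> h) u = v"
    using h u aut_inv_apply[OF Gd_tree_aut[OF g(1)]] by (simp add: aut_mult_apply g(2)[symmetric])
  then show "\<exists>g\<in>Gd d. g u = v" using Gd_mult[OF Gd_inv[OF g(1)] h(1)] by blast
qed

section \<open>Branching over the derived subgroup\<close>

lemma B_conj:
  assumes h: "h \<in> Gd d" and y: "y \<in> B"
  shows "\<iota> h \<star> y \<star> h \<in> B"
proof -
  obtain s where s: "s \<in> Gd d" "root_perm s 1 = 1" "s\<down>1 = h" using Gd_fractalE[OF h] .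
  have sT: "s \<in> tree_aut d" using Gd_tree_aut[OF s(1)] .
  have "root_perm s 2 \<noteq> 1"
    using root_perm_inj[OF sT two_in_range one_in_range] s(2) by auto
  then have "root_perm s 2 \<in> {2..d}" using tree_aut_singleton(2)[OF sT two_in_range] by auto
  moreover have "\<iota> h \<star> y \<star> h \<in> sections_at (root_perm s 1) (Gd d) (root_perm s ` {1, 2})"
    using sections_at_conj[OF Gd_conj[OF s(1)] sT one_in_range y] s(3) by simp
  ultimately show ?thesis using s(2) sections_at_1_eq_B[of "root_perm s 2"] by simp
qed

lemma B_conj': "h \<in> Gd d \<Longrightarrow> y \<in> B \<Longrightarrow> h \<star> y \<star> \<iota> h \<in> B"
  using B_conj[OF Gd_inv] Gd_tree_aut by (metis aut_inv_inv)

lemma sect_in_B: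
  assumes g: "g \<in> Gd d" "g \<in> stab1_supp {k, k'}" and k: "k \<in> {1..d}" "k' \<in> {1..d}" "k \<noteq> k'"
  shows "g\<down>k \<in> B"
proof -
  obtain t where t: "t \<in> Gd d" "root_perm t 1 = k" using Gd_transitive_level1[OF k(1)] .
  define s where "s = \<iota> t"
  have s: "s \<in> Gd d" "s \<in> tree_aut d" using t(1) Gd_inv Gd_tree_aut by (simp_all add: s_def)
  have sk: "root_perm s k = 1"
    using root_perm_inv[OF Gd_tree_aut[OF t(1)] one_in_range] t(2) by (simp add: s_def)
  have "root_perm s k' \<noteq> 1" using root_perm_inj[OF s(2) k(1) k(2)] sk k(3) by auto
  then have k'': "root_perm s k' \<in> {2..d}" using tree_aut_singleton(2)[OF s(2) k(2)] by auto
  have "g\<down>k \<in> sections_at k (Gd d) {k, k'}" using g by (auto simp: sections_at_def)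
  then have "\<iota> (s\<down>k) \<star> g\<down>k \<star> s\<down>k \<in> sections_at 1 (Gd d) {1, root_perm s k'}"
    using sections_at_conj[OF Gd_conj[OF s(1)] s(2) k(1), of "g\<down>k" "{k, k'}"] sk by simp
  then have "\<iota> (s\<down>k) \<star> g\<down>k \<star> s\<down>k \<in> B" using sections_at_1_eq_B[of "root_perm s k'"] k'' by simp
  then have "s\<down>k \<star> (\<iota> (s\<down>k) \<star> g\<down>k \<star> s\<down>k) \<star> \<iota> (s\<down>k) \<in> B"
    using B_conj' sect_in_Gd[OF s(1) k(1)] by blast
  then show ?thesis
    using aut_conj_cancel sect_tree_aut[OF s(2) k(1)] sect_tree_aut[OF Gd_tree_aut[OF g(1)] k(1)]
    by simp
qed

lemma gen_a_mult_nxt_in_B: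
  assumes k: "k \<in> {1..d}"
  shows "a k \<star> a (nxt d k) \<in> B"
proof -
  have n: "nxt d k \<in> {1..d}" "nxt d k \<noteq> k" using nxt_in_range nxt_neq[OF k] by simp_all
  have akT: "a k \<in> tree_aut d" using gen_a_tree_aut[OF k] .
  have "root_perm (a k \<star> a k) z = z \<and> (z \<notin> {k, nxt d k} \<longrightarrow> (a k \<star> a k)\<down>z = \<e>)"
    if z: "z \<in> {1..d}" for z
  proof (cases "z \<in> {k, nxt d k}")
    case True
    then show ?thesis
      using root_perm_mult[OF akT akT z] root_perm_gen_a[OF k k] root_perm_gen_a[OF k n(1)] n(2)
      by auto
  next
    case False
    then show ?thesis
      using root_perm_mult[OF akT akT z] sect_mult[OF akT akT z] root_perm_gen_a[OF k z]
        sect_gen_a[OF k z] by (simp add: sect_one z)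
  qed
  then have "a k \<star> a k \<in> stab1_supp {k, nxt d k}" using akT by (simp add: stab1_supp_def)
  moreover have "(a k \<star> a k)\<down>k = a k \<star> a (nxt d k)"
    using sect_mult[OF akT akT k] root_perm_gen_a[OF k k] sect_gen_a[OF k k] sect_gen_a[OF k n(1)] n
    by simp
  ultimately show ?thesis
    using sect_in_B[OF Gd_mult[OF gen_a_in_Gd[OF k] gen_a_in_Gd[OF k]] _ k n(1) n(2)[symmetric]]
    by simp
qed

definition cong_B :: "(nat list \<Rightarrow> nat list) \<Rightarrow> (nat list \<Rightarrow> nat list) \<Rightarrow> bool"
    (infix "\<approx>\<^sub>B" 50) where
  "u \<approx>\<^sub>B v \<longleftrightarrow> \<iota> u \<star> v \<in> B"

lemma cong_B_refl: "u \<in> Gd d \<Longrightarrow> u \<approx>\<^sub>B u"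
  using subgroup.one_closed[OF subgroup_B] Gd_tree_aut by (simp add: cong_B_def)

lemma cong_B_sym: "u \<in> Gd d \<Longrightarrow> v \<in> Gd d \<Longrightarrow> u \<approx>\<^sub>B v \<Longrightarrow> v \<approx>\<^sub>B u"
  using subgroup.m_inv_closed[OF subgroup_B] Gd_tree_aut
  by (fastforce simp: cong_B_def Aut.inv_mult_group)

lemma cong_B_trans:
  assumes "u \<in> Gd d" "v \<in> Gd d" "w \<in> Gd d" "u \<approx>\<^sub>B v" "v \<approx>\<^sub>B w"
  shows "u \<approx>\<^sub>B w"
proof -
  have "\<iota> u \<star> v \<star> (\<iota> v \<star> w) \<in> B"
    using assms subgroup.m_closed[OF subgroup_B] by (simp add: cong_B_def)
  moreover have "\<iota> u \<star> v \<star> (\<iota> v \<star> w) = \<iota> u \<star> w"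
    using assms Gd_tree_aut by (simp add: Aut.m_assoc aut_cancel_inv_left)
  ultimately show ?thesis by (simp add: cong_B_def)
qed

lemma cong_B_mult:
  assumes "u \<in> Gd d" "v \<in> Gd d" "u' \<in> Gd d" "v' \<in> Gd d" "u \<approx>\<^sub>B v" "u' \<approx>\<^sub>B v'"
  shows "u \<star> u' \<approx>\<^sub>B v \<star> v'"
proof -
  have "(\<iota> u' \<star> (\<iota> u \<star> v) \<star> u') \<star> (\<iota> u' \<star> v') \<in> B"
    using assms B_conj subgroup.m_closed[OF subgroup_B] by (simp add: cong_B_def)
  then show ?thesis
    using assms Gd_tree_aut by (simp add: cong_B_def Aut.m_assoc Aut.inv_mult_group aut_cancel_inv_left)
qed

lemma cong_B_inv:
  assumes "u \<in> Gd d" "v \<in> Gd d" "u \<approx>\<^sub>B v"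
  shows "\<iota> u \<approx>\<^sub>B \<iota> v"
proof -
  have "u \<star> \<iota> (\<iota> u \<star> v) \<star> \<iota> u \<in> B"
    using assms B_conj' subgroup.m_inv_closed[OF subgroup_B] by (simp add: cong_B_def)
  then show ?thesis
    using assms Gd_tree_aut by (simp add: cong_B_def Aut.m_assoc Aut.inv_mult_group aut_cancel_inv_left)
qed

lemma gen_a_nxt_cong: "k \<in> {1..d} \<Longrightarrow> a (nxt d k) \<approx>\<^sub>B \<iota> (a k)"
  using subgroup.m_inv_closed[OF subgroup_B gen_a_mult_nxt_in_B] gen_a_tree_aut nxt_in_range
  by (simp add: cong_B_def Aut.inv_mult_group)

lemma gen_a_cong_parity: "1 \<le> k \<Longrightarrow> k \<le> d \<Longrightarrow> a k \<approx>\<^sub>B (if odd k then a 1 else \<iota> (a 1))"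
proof (induction k rule: dec_induct)
  case base
  then show ?case using cong_B_refl[OF gen_a_in_Gd[OF one_in_range]] by simp
next
  case (step k)
  have k: "k \<in> {1..d}" "Suc k \<in> {1..d}" using step by simp_all
  have G: "a k \<in> Gd d" "a (Suc k) \<in> Gd d" "a 1 \<in> Gd d" "\<iota> (a k) \<in> Gd d" "\<iota> (a 1) \<in> Gd d"
    using gen_a_in_Gd k one_in_range Gd_inv by simp_all
  have next_cong: "a (Suc k) \<approx>\<^sub>B \<iota> (a k)" using gen_a_nxt_cong[OF k(1)] nxt_less step by simp
  have IH: "\<iota> (a k) \<approx>\<^sub>B \<iota> (if odd k then a 1 else \<iota> (a 1))"
    using cong_B_inv G step by (simp split: if_splits)
  show ?case
    using cong_B_trans[OF G(2,4) _ next_cong IH] G gen_a_tree_aut one_in_range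
    by (cases "odd k") (simp_all add: Gd_inv)
qed

lemma inv_gen_a_1_cong: "\<iota> (a 1) \<approx>\<^sub>B a 1"
proof -
  have G: "a 1 \<in> Gd d" "a d \<in> Gd d" "\<iota> (a 1) \<in> Gd d" "\<iota> (a d) \<in> Gd d"
    using gen_a_in_Gd one_in_range d_in_range Gd_inv by simp_all
  have "a d \<approx>\<^sub>B a 1" using gen_a_cong_parity[of d] odd_d three_le_d by simp
  then have "\<iota> (a d) \<approx>\<^sub>B \<iota> (a 1)" using cong_B_inv G by blast
  moreover have "a 1 \<approx>\<^sub>B \<iota> (a d)" using gen_a_nxt_cong[OF d_in_range] nxt_self by simp
  ultimately have "a 1 \<approx>\<^sub>B \<iota> (a 1)" using cong_B_trans G by blast
  then show ?thesis using cong_B_sym G by blast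
qed

lemma gen_a_cong: "k \<in> {1..d} \<Longrightarrow> a k \<approx>\<^sub>B a 1"
  using gen_a_cong_parity[of k] cong_B_trans[OF _ _ _ _ inv_gen_a_1_cong] gen_a_in_Gd one_in_range Gd_inv
  by (cases "odd k") auto

lemma gen_prod_cong: "k \<le> d \<Longrightarrow> gen_prod k \<approx>\<^sub>B (if odd k then a 1 else \<e>)"
proof (induction k)
  case 0
  then show ?case using cong_B_refl Gd_one by simp
next
  case (Suc k)
  have k: "Suc k \<in> {1..d}" using Suc.prems by simp
  have G: "gen_prod k \<in> Gd d" "a (Suc k) \<in> Gd d" "a 1 \<in> Gd d" "\<iota> (a 1) \<in> Gd d"
    using gen_prod_in_Gd gen_a_in_Gd k one_in_range Gd_inv Suc.prems by simp_all
  have ak: "a (Suc k) \<approx>\<^sub>B a 1" using gen_a_cong[OF k] .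
  show ?case
  proof (cases "odd k")
    case True
    have "a (Suc k) \<approx>\<^sub>B \<iota> (a 1)"
      using cong_B_trans[OF G(2,3,4) ak] cong_B_sym[OF G(4,3) inv_gen_a_1_cong] by blast
    then have "gen_prod k \<star> a (Suc k) \<approx>\<^sub>B a 1 \<star> \<iota> (a 1)"
      using cong_B_mult G Suc True by simp
    then show ?thesis using True gen_a_tree_aut[OF one_in_range] by simp
  next
    case False
    then have "gen_prod k \<star> a (Suc k) \<approx>\<^sub>B \<e> \<star> a 1"
      using cong_B_mult[OF G(1) Gd_one G(2,3) _ ak] Suc by simp
    then show ?thesis using False gen_a_tree_aut[OF one_in_range] by simp
  qed
qed

lemma Gd_generated_by_B: "Gd d = generate (AutT d) (insert (gen_prod d) B)"
proof
  let ?H = "generate (AutT d) (insert (gen_prod d) B)"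
  have gens: "insert (gen_prod d) B \<subseteq> Gd d" using B_subset_Gd gen_prod_in_Gd by simp
  then show "?H \<subseteq> Gd d" by (rule Aut.generate_subgroup_incl[OF _ subgroup_Gd])
  have H: "subgroup ?H (AutT d)"
    using gens subgroup.subset[OF subgroup_Gd] by (intro Aut.generate_is_subgroup) blast
  have "a k \<in> ?H" if k: "k \<in> {1..d}" for k
  proof -
    have G: "gen_prod d \<in> Gd d" "a k \<in> Gd d" "a 1 \<in> Gd d"
      using gen_prod_in_Gd gen_a_in_Gd k one_in_range by simp_all
    have "gen_prod d \<approx>\<^sub>B a 1" using gen_prod_cong[of d] odd_d by simp
    moreover have "a 1 \<approx>\<^sub>B a k" using cong_B_sym[OF G(2,3) gen_a_cong[OF k]] .
    ultimately have "\<iota> (gen_prod d) \<star> a k \<in> B"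
      using cong_B_trans[OF G(1,3,2)] by (simp add: cong_B_def)
    then have "gen_prod d \<star> (\<iota> (gen_prod d) \<star> a k) \<in> ?H"
      by (intro subgroup.m_closed[OF H] generate.incl) simp_all
    then show ?thesis using aut_cancel_inv_left[OF gen_prod_tree_aut gen_a_tree_aut[OF k]] by simp
  qed
  then show "Gd d \<subseteq> ?H"
    unfolding Gd_def by (intro Aut.generate_subgroup_incl H[unfolded Gd_def]) blast
qed

abbreviation K where "K \<equiv> sections_at 1 (Gd' d) {1}"

lemma subgroup_K: "subgroup K (AutT d)"
  by (rule subgroup_sections_at[OF subgroup_Gd' one_in_range])

lemma K_conj:
  assumes h: "h \<in> Gd d" and y: "y \<in> K"
  shows "\<iota> h \<star> y \<star> h \<in> K"
proof -
  obtain s where s: "s \<in> Gd d" "root_perm s 1 = 1" "s\<down>1 = h" using Gd_fractalE[OF h] .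
  show ?thesis
    using sections_at_conj[OF Gd'_conj_inv[OF s(1)] Gd_tree_aut[OF s(1)] one_in_range y] s(2,3)
    by simp
qed

lemma K_conj': "h \<in> Gd d \<Longrightarrow> y \<in> K \<Longrightarrow> h \<star> y \<star> \<iota> h \<in> K"
  using K_conj[OF Gd_inv] Gd_tree_aut by (metis aut_inv_inv)

lemma commutator_B_B_in_K:
  assumes b: "b \<in> B" and b': "b' \<in> B"
  shows "b \<star> b' \<star> \<iota> b \<star> \<iota> b' \<in> K"
proof -
  obtain g where g: "g \<in> Gd d" "g \<in> stab1_supp {1, 2}" "g\<down>1 = b"
    using b by (auto simp: sections_at_def)
  have "b' \<in> sections_at 1 (Gd d) {1, 3}" using b' sections_at_1_eq_B[of 3] three_le_d by simp
  then obtain h where h: "h \<in> Gd d" "h \<in> stab1_supp {1, 3}" "h\<down>1 = b'"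
    by (auto simp: sections_at_def)
  have "g \<star> h \<star> \<iota> g \<star> \<iota> h \<in> stab1_supp {1}"
    using commutator_stab1_supp[OF g(2) h(2)] by (simp add: insert_commute)
  moreover have "(g \<star> h \<star> \<iota> g \<star> \<iota> h)\<down>1 = b \<star> b' \<star> \<iota> b \<star> \<iota> b'"
    using sect_commutator_stab1[OF g(2) h(2) one_in_range] g(3) h(3) by simp
  ultimately show ?thesis by (rule sections_atI[OF commutator_in_Gd'[OF g(1) h(1)]])
qed

lemma commutator_B_gen_prod_in_K:
  assumes b: "b \<in> B"
  shows "b \<star> gen_prod d \<star> \<iota> b \<star> \<iota> (gen_prod d) \<in> K"
proof -
  obtain g where g: "g \<in> Gd d" "g \<in> stab1_supp {1, 2}" "g\<down>1 = b"
    using b by (auto simp: sections_at_def)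
  define y where "y = gen_prod (d - 1) \<star> \<iota> (a 1) \<star> a d"
  have y: "y \<in> Gd d" "root_perm y 1 = 1" "y\<down>1 = gen_prod d" "root_perm y 2 = 2" "y\<down>2 = \<e>"
    unfolding y_def by (fact gen_prod_lift)+
  note comm = commutator_stab1_supp_fixing[OF g(2) one_in_range two_in_range Gd_tree_aut[OF y(1)] y(2,4,5)]
  show ?thesis
    by (rule sections_atI[OF commutator_in_Gd'[OF g(1) y(1)] comm(1)]) (use comm(2) g(3) y(3) in simp)
qed

theorem Gd'_subset_K: "Gd' d \<subseteq> K"
proof -
  let ?S = "insert (gen_prod d) B"
  have S: "?S \<subseteq> carrier (AutT d)"
    using B_subset_Gd Gd_tree_aut gen_prod_tree_aut by auto
  have "derived (AutT d) (generate (AutT d) ?S) \<subseteq> K"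
  proof (rule Aut.derived_generate_subset[OF S subgroup_K])
    show "h \<star> k \<star> \<iota> h \<in> K" if "h \<in> generate (AutT d) ?S" "k \<in> K" for h k
      using K_conj' that Gd_generated_by_B by blast
    have T: "x \<in> ?S \<Longrightarrow> x \<in> tree_aut d" for x using S by auto
    show "s \<star> t \<star> \<iota> s \<star> \<iota> t \<in> K" if st: "s \<in> ?S" "t \<in> ?S" for s t
    proof -
      consider "s = gen_prod d" "t = gen_prod d" | "s \<in> B" "t \<in> B"
        | "s \<in> B" "t = gen_prod d" | "s = gen_prod d" "t \<in> B"
        using st by blast
      then show ?thesis
      proof cases
        case 1
        then show ?thesis
          using subgroup.one_closed[OF subgroup_K] gen_prod_tree_aut[of d] by (simp add: Aut.m_assoc)
      next
        case 2
        then show ?thesis by (rule commutator_B_B_in_K)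
      next
        case 3
        then show ?thesis using commutator_B_gen_prod_in_K by simp
      next
        case 4
        then have "\<iota> (t \<star> s \<star> \<iota> t \<star> \<iota> s) \<in> K"
          using subgroup.m_inv_closed[OF subgroup_K commutator_B_gen_prod_in_K] by simp
        then show ?thesis using T st by (simp add: Aut.commutator_inv)
      qed
    qed
  qed
  then show ?thesis unfolding Gd'_def by (simp only: Gd_generated_by_B[symmetric])
qed

lemma Gd'_sections_at:
  assumes m: "m \<in> {1..d}" and y: "y \<in> Gd' d"
  shows "y \<in> sections_at m (Gd' d) {m}"
proof -
  obtain t where t: "t \<in> Gd d" "root_perm t 1 = m" using Gd_transitive_level1[OF m] .
  have t1: "t\<down>1 \<in> Gd d" using sect_in_Gd[OF t(1) one_in_range] .
  have "t\<down>1 \<star> y \<star> \<iota> (t\<down>1) \<in> K" using Gd'_conj[OF t1 y] Gd'_subset_K by blast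
  then have "\<iota> (t\<down>1) \<star> (t\<down>1 \<star> y \<star> \<iota> (t\<down>1)) \<star> t\<down>1 \<in> sections_at m (Gd' d) {m}"
    using sections_at_conj[OF Gd'_conj_inv[OF t(1)] Gd_tree_aut[OF t(1)] one_in_range, of _ "{1}"] t(2)
    by simp
  moreover have "y \<in> tree_aut d" using y Gd'_subset Gd_tree_aut by blast
  ultimately show ?thesis using Gd_tree_aut[OF t1] by (simp add: Aut.m_assoc aut_inv_cancel_left)
qed

lemma Gd'_product:
  assumes h: "\<forall>x\<in>{1..d}. h x \<in> Gd' d"
  shows "F \<subseteq> {1..d} \<Longrightarrow> \<exists>g\<in>Gd' d \<inter> stab1_supp F. \<forall>x\<in>F. g\<down>x = h x"
proof (induction F rule: infinite_finite_induct)
  case (infinite F)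
  then show ?case using finite_subset by blast
next
  case empty
  show ?case using subgroup.one_closed[OF subgroup_Gd'] subgroup.one_closed[OF subgroup_stab1_supp] by blast
next
  case (insert m F)
  obtain g where g: "g \<in> Gd' d" "g \<in> stab1_supp F" "\<forall>x\<in>F. g\<down>x = h x"
    using insert by blast
  have m: "m \<in> {1..d}" using insert.prems by simp
  obtain g' where g': "g' \<in> Gd' d" "g' \<in> stab1_supp {m}" "g'\<down>m = h m"
  proof -
    have "h m \<in> sections_at m (Gd' d) {m}" using Gd'_sections_at[OF m] h m by blast
    then show ?thesis using that by (auto simp: sections_at_def)
  qed
  have "g \<in> stab1_supp (insert m F)" "g' \<in> stab1_supp (insert m F)"
    using g(2) g'(2) stab1_supp_mono[of F "insert m F"] stab1_supp_mono[of "{m}" "insert m F"] by auto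
  then have "g \<star> g' \<in> stab1_supp (insert m F)" by (rule subgroup.m_closed[OF subgroup_stab1_supp])
  moreover have "g \<star> g' \<in> Gd' d" using g(1) g'(1) by (rule subgroup.m_closed[OF subgroup_Gd'])
  moreover have "(g \<star> g')\<down>x = h x" if x: "x \<in> insert m F" for x
  proof -
    have xd: "x \<in> {1..d}" using x insert.prems by blast
    have T: "g\<down>x \<in> tree_aut d" "g'\<down>x \<in> tree_aut d"
      using g(2) g'(2) xd by (simp_all add: stab1_supp_def sect_tree_aut)
    have "(g \<star> g')\<down>x = g\<down>x \<star> g'\<down>x"
      using sect_stab1_mult[OF g(2) _ xd] g'(2) by (simp add: stab1_supp_def)
    then show ?thesis
      using x insert.hyps(2) g g' xd T by (auto simp: stab1_supp_def)
  qed
  ultimately show ?case by blast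
qed

theorem Gd'_branch:
  assumes "\<forall>x\<in>{1..d}. h x \<in> Gd' d"
  shows "(\<lambda>x\<in>{1..d}. h x) \<in> psi1 d ` (Gd' d \<inter> stab1 d (Gd d))"
proof -
  obtain g where g: "g \<in> Gd' d" "g \<in> stab1_supp {1..d}" "\<forall>x\<in>{1..d}. g\<down>x = h x"
    using Gd'_product[OF assms order_refl] by blast
  have "psi1 d g = (\<lambda>x\<in>{1..d}. h x)" using g(3) by (auto simp: psi1_def)
  moreover have "g [x] = [x]" if "x \<in> {1..d}" for x
    using g(2) tree_aut_singleton(1)[of g d x] that by (simp add: stab1_supp_def)
  then have "g \<in> stab1 d (Gd d)" using g(1) Gd'_subset by (auto simp: stab1_def)
  ultimately show ?thesis using g(1) by force
qed

end

theorem theorem4p8: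
  fixes d :: nat
  assumes "d \<ge> 3" and "odd d"
  shows "spherically_transitive d (Gd d) \<and>
         (\<forall>h. (\<forall>x \<in> {1..d}. h x \<in> Gd' d) \<longrightarrow>
              (\<lambda>x \<in> {1..d}. h x) \<in> psi1 d ` (Gd' d \<inter> stab1 d (Gd d)))"
proof -
  interpret Gd_odd d
    by unfold_locales (use assms in auto)
  show ?thesis using spherically_transitive_Gd Gd'_branch by blast
qed

end
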